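(* The truncated welfare-based dynamic posted-price (TWDPP) mechanism is ex post incentive compatible for myopic bidders and dominant-strategy incentive compatible for myopic miners.
   Context: Dynamic posted-price setting: at each time step a block with $m$ slots is produced by an active miner; $n$ bidders with private values $v_i\ge0$ submit bids $b_i$, each participating once. Given the current posted price $q>0$, $M(q)=\{i:b_i\ge q\}$; a block is $B\subseteq M(q)$ with $|B|\le m$; each $i\in B$ gets a slot and pays $q$. The TWDPP mechanism uses the random maximal (RM) allocation rule — $B$ is chosen uniformly at random among subsets of $M(q)$ of size $\min\{m,|M(q)|\}$ — and the update rule $T_{TW}(q,B)=\alpha\frac1m\sum_{i\in B}\min\{b_i,(1+\delta)q\}+(1-\alpha)q$ if $|B|<m$, and $\alpha(1+\delta)q+(1-\alpha)q$ if $|B|=m$, with $\alpha\in(0,1)$, $\delta\in(0,\infty)$. A myopic bidder's utility is $v_i-q$ if included and $0$ otherwise (in expectation over allocation randomness); ex post IC for myopic bidders means that, when the miner follows the RM rule, bidding $b_i=v_i$ weakly dominates every other bid for all bids of others. A myopic miner's utility is the total payment $q|B|$ in the current block; DSIC for myopic miners means following the RM rule is a weakly dominant, utility-maximizing strategy for the miner for all bids. *)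

theory Defs
  imports "HOL-Probability.Probability"
begin

text \<open>Bidders are the elements of a finite set N (so n = card N); a bid profile is
  b :: 'a => real.  The current posted price is q, the block size is m.\<close>

definition Mset :: "'a set \<Rightarrow> ('a \<Rightarrow> real) \<Rightarrow> real \<Rightarrow> 'a set" where
  "Mset N b q = {i \<in> N. b i \<ge> q}"

definition feasible_block :: "nat \<Rightarrow> 'a set \<Rightarrow> ('a \<Rightarrow> real) \<Rightarrow> real \<Rightarrow> 'a set \<Rightarrow> bool" where
  "feasible_block m N b q B \<longleftrightarrow> B \<subseteq> Mset N b q \<and> card B \<le> m"

definition RM_alloc :: "nat \<Rightarrow> 'a set \<Rightarrow> ('a \<Rightarrow> real) \<Rightarrow> real \<Rightarrow> 'a set pmf" where
  "RM_alloc m N b q =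
     pmf_of_set {B. B \<subseteq> Mset N b q \<and> card B = min m (card (Mset N b q))}"

definition TW_update :: "nat \<Rightarrow> real \<Rightarrow> real \<Rightarrow> ('a \<Rightarrow> real) \<Rightarrow> real \<Rightarrow> 'a set \<Rightarrow> real" where
  "TW_update m \<alpha> \<delta> b q B =
     (if card B < m
      then \<alpha> * (1 / real m) * (\<Sum>i\<in>B. min (b i) ((1 + \<delta>) * q)) + (1 - \<alpha>) * q
      else \<alpha> * (1 + \<delta>) * q + (1 - \<alpha>) * q)"

type_synonym 'a dpp_mech =
  "(nat \<Rightarrow> 'a set \<Rightarrow> ('a \<Rightarrow> real) \<Rightarrow> real \<Rightarrow> 'a set pmf) \<times>
   (nat \<Rightarrow> ('a \<Rightarrow> real) \<Rightarrow> real \<Rightarrow> 'a set \<Rightarrow> real)"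

definition TWDPP :: "real \<Rightarrow> real \<Rightarrow> 'a dpp_mech" where
  "TWDPP \<alpha> \<delta> = (RM_alloc, \<lambda>m. TW_update m \<alpha> \<delta>)"

definition alloc_rule :: "'a dpp_mech \<Rightarrow> nat \<Rightarrow> 'a set \<Rightarrow> ('a \<Rightarrow> real) \<Rightarrow> real \<Rightarrow> 'a set pmf" where
  "alloc_rule M = fst M"

definition bidder_utility ::
  "'a dpp_mech \<Rightarrow> nat \<Rightarrow> 'a set \<Rightarrow> ('a \<Rightarrow> real) \<Rightarrow> real \<Rightarrow> 'a \<Rightarrow> real \<Rightarrow> real" where
  "bidder_utility Mech m N b q i v =
     measure_pmf.expectation (alloc_rule Mech m N b q) (\<lambda>B. if i \<in> B then v - q else 0)"

definition ex_post_IC_myopic_bidders :: "'a dpp_mech \<Rightarrow> nat \<Rightarrow> 'a set \<Rightarrow> real \<Rightarrow> bool" where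
  "ex_post_IC_myopic_bidders Mech m N q \<longleftrightarrow>
     (\<forall>i\<in>N. \<forall>v::real. \<forall>b::'a \<Rightarrow> real. \<forall>b'::real. v \<ge> 0 \<longrightarrow>
        bidder_utility Mech m N (b(i := b')) q i v \<le> bidder_utility Mech m N (b(i := v)) q i v)"

definition miner_utility :: "real \<Rightarrow> 'a set \<Rightarrow> real" where
  "miner_utility q B = q * real (card B)"

definition DSIC_myopic_miner :: "'a dpp_mech \<Rightarrow> nat \<Rightarrow> 'a set \<Rightarrow> real \<Rightarrow> bool" where
  "DSIC_myopic_miner Mech m N q \<longleftrightarrow>
     (\<forall>b::'a \<Rightarrow> real.
        (\<forall>B\<in>set_pmf (alloc_rule Mech m N b q). feasible_block m N b q B) \<and>
        (\<forall>B'. feasible_block m N b q B' \<longrightarrow>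
           miner_utility q B' \<le> measure_pmf.expectation (alloc_rule Mech m N b q) (miner_utility q)))"

end

theory Submission
  imports Defs
begin

text \<open>Myopic agents only care about the current block.
  Under the RM rule a bidder's expected utility is (v - q) times the probability of being
  included; this probability is zero for a bid below q and does not depend on the bid
  otherwise, since the bid only matters through membership in M(q).  Hence truthful
  bidding secures max(v - q, 0) times the inclusion probability, which no other bid
  beats.  The miner always fills min(m, |M(q)|) slots, the largest size of any feasible
  block, so no deviation raises the revenue q |B|.\<close>

definition maximal_blocks :: "nat \<Rightarrow> 'a set \<Rightarrow> 'a set set" where
  "maximal_blocks m M = {B. B \<subseteq> M \<and> card B = min m (card M)}"

lemma finite_maximal_blocks: "finite M \<Longrightarrow> finite (maximal_blocks m M)"
  unfolding maximal_blocks_def by (rule finite_subset[of _ "Pow M"]) auto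

lemma maximal_blocks_nonempty: "finite M \<Longrightarrow> maximal_blocks m M \<noteq> {}"
  using obtain_subset_with_card_n[of "min m (card M)" M] by (auto simp: maximal_blocks_def)

lemma finite_Mset: "finite N \<Longrightarrow> finite (Mset N b q)"
  by (simp add: Mset_def)

lemma Mset_fun_upd_eq:
  assumes "q \<le> c" and "q \<le> c'"
  shows "Mset N (b(i := c)) q = Mset N (b(i := c')) q"
  using assms by (auto simp: Mset_def)

lemma RM_alloc_eq_pmf_of_set: "RM_alloc m N b q = pmf_of_set (maximal_blocks m (Mset N b q))"
  by (simp add: RM_alloc_def maximal_blocks_def)

lemma set_pmf_RM_alloc:
  "finite N \<Longrightarrow> set_pmf (RM_alloc m N b q) = maximal_blocks m (Mset N b q)"
  by (simp add: RM_alloc_eq_pmf_of_set finite_Mset finite_maximal_blocks maximal_blocks_nonempty)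

lemma alloc_rule_TWDPP: "alloc_rule (TWDPP \<alpha> \<delta>) = RM_alloc"
  by (simp add: alloc_rule_def TWDPP_def)

lemma expectation_if_mem:
  "measure_pmf.expectation p (\<lambda>B. if i \<in> B then c else 0) = c * measure_pmf.prob p {B. i \<in> B}"
proof -
  have "(\<lambda>B. if i \<in> B then c else 0) = (\<lambda>B. c * indicator {B. i \<in> B} B)"
    by (auto simp: indicator_def)
  then show ?thesis by simp
qed

lemma bidder_utility_TWDPP:
  "bidder_utility (TWDPP \<alpha> \<delta>) m N b q i v = (v - q) * measure_pmf.prob (RM_alloc m N b q) {B. i \<in> B}"
  by (simp add: bidder_utility_def alloc_rule_TWDPP expectation_if_mem)

lemma prob_RM_alloc_includes_low_bidder:
  assumes "finite N" and "b i < q"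
  shows "measure_pmf.prob (RM_alloc m N b q) {B. i \<in> B} = 0"
proof -
  have "i \<notin> Mset N b q" using assms(2) by (simp add: Mset_def)
  then show ?thesis
    by (auto simp: measure_pmf_zero_iff set_pmf_RM_alloc[OF assms(1)] maximal_blocks_def)
qed

lemma TWDPP_ex_post_IC:
  assumes "finite N"
  shows "ex_post_IC_myopic_bidders (TWDPP \<alpha> \<delta>) m N q"
  unfolding ex_post_IC_myopic_bidders_def
proof (intro ballI allI impI)
  fix i v b b'
  define P where "P c = measure_pmf.prob (RM_alloc m N (b(i := c)) q) {B. i \<in> B}" for c
  have U: "bidder_utility (TWDPP \<alpha> \<delta>) m N (b(i := c)) q i v = (v - q) * P c" for c
    by (simp add: bidder_utility_TWDPP P_def)
  have P_low: "P c = 0" if "c < q" for c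
    unfolding P_def using prob_RM_alloc_includes_low_bidder[OF assms] that by simp
  have P_nonneg: "0 \<le> P c" for c
    by (simp add: P_def)
  have "(v - q) * P b' \<le> (v - q) * P v"
  proof (cases "q \<le> v")
    case True
    show ?thesis
    proof (cases "q \<le> b'")
      case True
      then have "P b' = P v"
        by (simp only: P_def RM_alloc_def Mset_fun_upd_eq[OF True \<open>q \<le> v\<close>])
      then show ?thesis by simp
    next
      case False
      then show ?thesis using \<open>q \<le> v\<close> P_low[of b'] P_nonneg[of v] by simp
    qed
  next
    case False
    then show ?thesis using P_low[of v] P_nonneg[of b'] by (simp add: mult_nonpos_nonneg)
  qed
  then show "bidder_utility (TWDPP \<alpha> \<delta>) m N (b(i := b')) q i v
      \<le> bidder_utility (TWDPP \<alpha> \<delta>) m N (b(i := v)) q i v"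
    by (simp only: U)
qed

lemma card_feasible_block_le:
  assumes "finite N" and "feasible_block m N b q B"
  shows "card B \<le> min m (card (Mset N b q))"
  using assms card_mono[OF finite_Mset[OF assms(1)]] by (auto simp: feasible_block_def)

lemma expectation_RM_alloc_miner_utility:
  assumes "finite N"
  shows "measure_pmf.expectation (RM_alloc m N b q) (miner_utility q)
      = q * real (min m (card (Mset N b q)))"
proof -
  let ?S = "maximal_blocks m (Mset N b q)"
  have fin: "finite ?S" and ne: "?S \<noteq> {}"
    using assms by (simp_all add: finite_Mset finite_maximal_blocks maximal_blocks_nonempty)
  have "measure_pmf.expectation (RM_alloc m N b q) (miner_utility q)
      = (\<Sum>B\<in>?S. miner_utility q B) / card ?S"
    using fin ne by (simp add: RM_alloc_eq_pmf_of_set integral_pmf_of_set)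
  also have "(\<Sum>B\<in>?S. miner_utility q B) = (\<Sum>B\<in>?S. q * real (min m (card (Mset N b q))))"
    by (intro sum.cong) (auto simp: miner_utility_def maximal_blocks_def)
  finally show ?thesis using fin ne by simp
qed

lemma TWDPP_DSIC_miner:
  assumes "finite N" and "q > 0"
  shows "DSIC_myopic_miner (TWDPP \<alpha> \<delta>) m N q"
  unfolding DSIC_myopic_miner_def alloc_rule_TWDPP
proof (intro allI conjI ballI impI)
  fix b B
  assume "B \<in> set_pmf (RM_alloc m N b q)"
  then show "feasible_block m N b q B"
    by (auto simp: set_pmf_RM_alloc[OF assms(1)] maximal_blocks_def feasible_block_def)
next
  fix b B'
  assume "feasible_block m N b q B'"
  then have "card B' \<le> min m (card (Mset N b q))"
    using card_feasible_block_le[OF assms(1)] by blast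
  then show "miner_utility q B' \<le> measure_pmf.expectation (RM_alloc m N b q) (miner_utility q)"
    using assms(2)
    by (simp add: expectation_RM_alloc_miner_utility[OF assms(1)] miner_utility_def)
qed

theorem mainTheorem7:
  fixes N :: "'a set" and m :: nat and q \<alpha> \<delta> :: real
  assumes "finite N" and "m \<ge> 1" and "q > 0"
    and "0 < \<alpha>" and "\<alpha> < 1" and "0 < \<delta>"
  shows "ex_post_IC_myopic_bidders (TWDPP \<alpha> \<delta>) m N q \<and> DSIC_myopic_miner (TWDPP \<alpha> \<delta>) m N q"
  using TWDPP_ex_post_IC[OF assms(1)] TWDPP_DSIC_miner[OF assms(1,3)] by blast

end
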